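(* For every finite field extension $\mathbb{K}/\mathbb{Q}$ with $\mathbb{K}$ real (embeddable in $\mathbb{R}$), there exists a finite set $\mathcal{I}$ of CI constraints such that $\mathcal{K}_{\mathbb{R}}(\mathcal{I})\neq\emptyset$ and for every $\Sigma\in\mathcal{K}_{\mathbb{R}}(\mathcal{I})$ the subfield of $\mathbb{R}$ generated by the entries of $\Sigma$ admits a field embedding of $\mathbb{K}$. In particular, all real algebraic numbers are necessary to witness the non-emptiness of regular Gaussian CI models: there exist non-empty positive models $\mathcal{K}_{\mathbb{R}}(\mathcal{I})$ containing no matrix with all entries rational.
   Context: Let $\mathsf{N}$ be a finite ground set. A CI statement is a symbol $(\mathsf{ij}|\mathsf{K})$ with $\mathsf{i}\neq\mathsf{j}\in\mathsf{N}$, $\mathsf{K}\subseteq\mathsf{N}\setminus\{\mathsf{i},\mathsf{j}\}$. For symmetric $\Sigma$, $[\mathsf{ij}|\mathsf{K}:\Sigma]:=\det\Sigma_{\mathsf{i}\mathsf{K},\mathsf{j}\mathsf{K}}$. A set of CI constraints $\mathcal{I}$ consists of statements $(\mathsf{ij}|\mathsf{K})$, satisfied by $\Sigma$ iff $[\mathsf{ij}|\mathsf{K}:\Sigma]=0$, and negated statements $\neg(\mathsf{ij}|\mathsf{K})$, satisfied iff $[\mathsf{ij}|\mathsf{K}:\Sigma]\neq0$. $\mathcal{K}_{\mathbb{R}}(\mathcal{I})$ is the set of real positive-definite symmetric $\mathsf{N}\times\mathsf{N}$ matrices satisfying all constraints of $\mathcal{I}$ (covariance matrices of regular Gaussian distributions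 satisfying $\mathcal I$). *)

theory Defs
  imports Complex_Main "Jordan_Normal_Form.Determinant"
begin

text \<open>Matrices on a finite ground set N of natural numbers are functions
  nat => nat => real; only the entries indexed by N x N are relevant.\<close>

type_synonym cmat = "nat \<Rightarrow> nat \<Rightarrow> real"

definition sym_on :: "nat set \<Rightarrow> cmat \<Rightarrow> bool" where
  "sym_on N S \<longleftrightarrow> (\<forall>i\<in>N. \<forall>j\<in>N. S i j = S j i)"

definition posdef_on :: "nat set \<Rightarrow> cmat \<Rightarrow> bool" where
  "posdef_on N S \<longleftrightarrow> sym_on N S \<and>
     (\<forall>x::nat \<Rightarrow> real. (\<exists>i\<in>N. x i \<noteq> 0) \<longrightarrow>
        (\<Sum>i\<in>N. \<Sum>j\<in>N. x i * S i j * x j) > 0)"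

text \<open>[ij|K : Sigma] = det Sigma_{iK,jK}; rows i,K and columns j,K, where K is
  listed in increasing order (the ordering only affects the sign).\<close>
definition ci_minor :: "cmat \<Rightarrow> nat \<Rightarrow> nat \<Rightarrow> nat set \<Rightarrow> real" where
  "ci_minor S i j K =
     (let rs = i # sorted_list_of_set K; cs = j # sorted_list_of_set K
      in det (mat (card K + 1) (card K + 1) (\<lambda>(r, c). S (rs ! r) (cs ! c))))"

datatype ci_constraint = CI nat nat "nat set" | NegCI nat nat "nat set"

fun ci_wf :: "nat set \<Rightarrow> ci_constraint \<Rightarrow> bool" where
  "ci_wf N (CI i j K) \<longleftrightarrow> i \<in> N \<and> j \<in> N \<and> i \<noteq> j \<and> K \<subseteq> N - {i, j}"
| "ci_wf N (NegCI i j K) \<longleftrightarrow> i \<in> N \<and> j \<in> N \<and> i \<noteq> j \<and> K \<subseteq> N - {i, j}"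

fun ci_sat :: "cmat \<Rightarrow> ci_constraint \<Rightarrow> bool" where
  "ci_sat S (CI i j K) \<longleftrightarrow> ci_minor S i j K = 0"
| "ci_sat S (NegCI i j K) \<longleftrightarrow> ci_minor S i j K \<noteq> 0"

definition gauss_model :: "nat set \<Rightarrow> ci_constraint set \<Rightarrow> cmat set" where
  "gauss_model N I = {S. posdef_on N S \<and> (\<forall>c\<in>I. ci_sat S c)}"

definition is_subfield_real :: "real set \<Rightarrow> bool" where
  "is_subfield_real F \<longleftrightarrow> 0 \<in> F \<and> 1 \<in> F \<and>
     (\<forall>x\<in>F. \<forall>y\<in>F. x + y \<in> F \<and> x * y \<in> F) \<and>
     (\<forall>x\<in>F. - x \<in> F \<and> inverse x \<in> F)"

definition subfield_gen :: "real set \<Rightarrow> real set" where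
  "subfield_gen A = \<Inter>{F. is_subfield_real F \<and> A \<subseteq> F}"

definition entries_on :: "nat set \<Rightarrow> cmat \<Rightarrow> real set" where
  "entries_on N S = {S i j | i j. i \<in> N \<and> j \<in> N}"

definition field_hom :: "('a::field \<Rightarrow> 'b::field) \<Rightarrow> bool" where
  "field_hom f \<longleftrightarrow> f 1 = 1 \<and> (\<forall>x y. f (x + y) = f x + f y \<and> f (x * y) = f x * f y)"

definition finite_over_rat :: "'a::field_char_0 itself \<Rightarrow> bool" where
  "finite_over_rat _ \<longleftrightarrow> (\<exists>B::'a set. finite B \<and>
     (\<forall>x::'a. \<exists>c. x = (\<Sum>b\<in>B. of_rat (c b) * b)))"

end

theory Submission
  imports Defs "HOL-Library.Countable"
begin

text \<open>
  Choose a \<open>\<rat>\<close>-basis \<open>b\<^sub>1, \<dots>, b\<^sub>n\<close> of \<open>\<bbbK>\<close> with integral structure constants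
  \<open>b\<^sub>i b\<^sub>j = \<Sum>\<^sub>k m\<^sub>i\<^sub>j\<^sub>k b\<^sub>k\<close>. A real embedding of \<open>\<bbbK>\<close> gives a nonzero real solution of
  \<open>y\<^sub>i y\<^sub>j = \<Sum>\<^sub>k m\<^sub>i\<^sub>j\<^sub>k y\<^sub>k\<close>, and conversely every nonzero real solution embeds \<open>\<bbbK>\<close> into
  the field generated by the \<open>y\<^sub>k\<close>, via \<open>b\<^sub>k \<mapsto> y\<^sub>k\<close>. These equations are encoded, up to
  rescaling, as orthogonality relations among four real vectors with prescribed supports and
  nonzero entries, and such relations are encoded by CI constraints: once a block of coordinate
  variables is forced to be diagonal, a vanishing almost-principal minor states that a Schur
  complement vanishes. A Gram matrix built from the embedding lies in the resulting model, and
  every matrix of the model produces a solution inside the field generated by its entries.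
  Applied to \<open>\<rat>(\<surd>2)\<close>, no matrix of the model can be rational.
\<close>

section \<open>Almost-principal minors with a diagonal block\<close>

definition arrowhead_mat :: "nat \<Rightarrow> 'a::zero \<Rightarrow> (nat \<Rightarrow> 'a) \<Rightarrow> (nat \<Rightarrow> 'a) \<Rightarrow> (nat \<Rightarrow> 'a) \<Rightarrow> 'a mat"
  where "arrowhead_mat m s p q d = mat (Suc m) (Suc m) (\<lambda>(r, c).
     if r = 0 then (if c = 0 then s else p (c - 1))
     else if c = 0 then q (r - 1) else if r = c then d (r - 1) else 0)"

definition arrowhead_elim_mat :: "nat \<Rightarrow> (nat \<Rightarrow> 'a::field) \<Rightarrow> (nat \<Rightarrow> 'a) \<Rightarrow> 'a mat"
  where "arrowhead_elim_mat m q d = mat (Suc m) (Suc m) (\<lambda>(r, c).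
     if r = c then 1 else if c = 0 then - q (r - 1) / d (r - 1) else 0)"

lemma det_arrowhead_elim_mat: "det (arrowhead_elim_mat m q d) = 1"
  by (subst det_lower_triangular[of "Suc m"]) (auto simp: arrowhead_elim_mat_def prod_list_diag_prod)

text \<open>Subtracting \<open>q r / d r\<close> times column \<open>r + 1\<close> from column 0 clears the first column
  below the corner and leaves the Schur complement of the diagonal block in the corner.\<close>

lemma arrowhead_mat_mult_elim:
  fixes s :: "'a::field"
  assumes d: "\<And>r. r < m \<Longrightarrow> d r \<noteq> 0" and rc: "r < Suc m" "c < Suc m"
  shows "(arrowhead_mat m s p q d * arrowhead_elim_mat m q d) $$ (r, c) =
    (if c = 0 then (if r = 0 then s - (\<Sum>r<m. p r * q r / d r) else 0)
     else if r = 0 then p (c - 1) else if r = c then d (r - 1) else 0)"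
proof -
  let ?A = "arrowhead_mat m s p q d" and ?E = "arrowhead_elim_mat m q d"
  have "(?A * ?E) $$ (r, c) = (\<Sum>t<Suc m. ?A $$ (r, t) * ?E $$ (t, c))"
    using rc by (simp add: arrowhead_mat_def arrowhead_elim_mat_def scalar_prod_def lessThan_atLeast0)
  also have "\<dots> = ?A $$ (r, c) + (if c = 0 then (\<Sum>t<m. ?A $$ (r, Suc t) * (- q t / d t)) else 0)"
  proof (cases "c = 0")
    case False
    then have "(\<Sum>t<Suc m. ?A $$ (r, t) * ?E $$ (t, c)) =
        (\<Sum>t<Suc m. if t = c then ?A $$ (r, c) else 0)"
      using rc by (intro sum.cong) (auto simp: arrowhead_elim_mat_def)
    then show ?thesis using False rc by simp
  qed (unfold sum.lessThan_Suc_shift, simp add: arrowhead_elim_mat_def)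
  also have "\<dots> = (if c = 0 then (if r = 0 then s - (\<Sum>r<m. p r * q r / d r) else 0)
      else if r = 0 then p (c - 1) else if r = c then d (r - 1) else 0)"
  proof (cases "c = 0 \<and> r \<noteq> 0")
    case True
    then obtain r' where r': "r = Suc r'" "r' < m" using rc by (cases r) auto
    have "(\<Sum>t<m. ?A $$ (r, Suc t) * (- q t / d t)) = (\<Sum>t<m. if t = r' then - q r' else 0)"
      using r' d by (intro sum.cong) (auto simp: arrowhead_mat_def)
    then show ?thesis using True r' by (simp add: arrowhead_mat_def)
  qed (use rc in \<open>auto simp: arrowhead_mat_def sum_negf\<close>)
  finally show ?thesis .
qed

lemma det_arrowhead_mat:
  fixes s :: "'a::field"
  assumes d: "\<And>r. r < m \<Longrightarrow> d r \<noteq> 0"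
  shows "det (arrowhead_mat m s p q d) = (\<Prod>r<m. d r) * (s - (\<Sum>r<m. p r * q r / d r))"
proof -
  let ?A = "arrowhead_mat m s p q d" and ?E = "arrowhead_elim_mat m q d"
  have A: "?A \<in> carrier_mat (Suc m) (Suc m)" and E: "?E \<in> carrier_mat (Suc m) (Suc m)"
    by (simp_all add: arrowhead_mat_def arrowhead_elim_mat_def)
  note AE = arrowhead_mat_mult_elim[OF d]
  have "upper_triangular (?A * ?E)"
    using A by (intro upper_triangularI) (simp add: AE)
  then have "det (?A * ?E) = prod_list (diag_mat (?A * ?E))"
    using A E by (intro det_upper_triangular) auto
  also have "\<dots> = (\<Prod>i<Suc m. (?A * ?E) $$ (i, i))"
    using A by (simp only: prod_list_diag_prod index_mult_mat(2) carrier_matD atLeast0LessThan)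
  also have "\<dots> = (s - (\<Sum>r<m. p r * q r / d r)) * (\<Prod>r<m. d r)"
    unfolding prod.lessThan_Suc_shift by (simp add: AE)
  finally show ?thesis
    using det_mult[OF A E] by (simp add: det_arrowhead_elim_mat mult.commute)
qed

lemma ci_minor_empty: "ci_minor S i j {} = S i j"
  by (simp add: ci_minor_def det_single)

lemma ci_minor_diagonal_block:
  assumes K: "finite K"
    and off_diag: "\<And>a b. a \<in> K \<Longrightarrow> b \<in> K \<Longrightarrow> a \<noteq> b \<Longrightarrow> S a b = 0"
    and diag: "\<And>a. a \<in> K \<Longrightarrow> S a a \<noteq> 0"
  shows "ci_minor S i j K = (\<Prod>a\<in>K. S a a) * (S i j - (\<Sum>a\<in>K. S i a * S a j / S a a))"
proof -
  define ks where "ks = sorted_list_of_set K"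
  define m where "m = card K"
  have dist: "distinct ks" and set_ks: "set ks = K" and len: "length ks = m"
    using K by (simp_all add: ks_def m_def)
  have bij: "bij_betw (\<lambda>r. ks ! r) {..<m} K"
    using bij_betw_nth[OF dist] len set_ks by simp
  have ks_in: "ks ! r \<in> K" if "r < m" for r
    using bij that by (auto simp: bij_betw_def)
  have ks_inj: "ks ! r = ks ! c \<longleftrightarrow> r = c" if "r < m" "c < m" for r c
    using dist len that by (simp add: nth_eq_iff_index_eq)
  let ?d = "\<lambda>r. S (ks ! r) (ks ! r)"
  have "mat (card K + 1) (card K + 1) (\<lambda>(r, c). S ((i # ks) ! r) ((j # ks) ! c)) =
      arrowhead_mat m (S i j) (\<lambda>c. S i (ks ! c)) (\<lambda>r. S (ks ! r) j) ?d" (is "?M = ?H")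
  proof (rule eq_matI)
    fix r c assume "r < dim_row ?H" "c < dim_col ?H"
    then have "r < Suc m" "c < Suc m" by (simp_all add: arrowhead_mat_def)
    then show "?M $$ (r, c) = ?H $$ (r, c)"
      using ks_in ks_inj off_diag by (cases r; cases c) (auto simp: arrowhead_mat_def m_def)
  qed (simp_all add: arrowhead_mat_def m_def)
  then have "ci_minor S i j K =
      det (arrowhead_mat m (S i j) (\<lambda>c. S i (ks ! c)) (\<lambda>r. S (ks ! r) j) ?d)"
    by (simp add: ci_minor_def ks_def)
  also have "\<dots> = (\<Prod>r<m. ?d r) * (S i j - (\<Sum>r<m. S i (ks ! r) * S (ks ! r) j / ?d r))"
    using diag ks_in by (intro det_arrowhead_mat) simp
  also have "\<dots> = (\<Prod>a\<in>K. S a a) * (S i j - (\<Sum>a\<in>K. S i a * S a j / S a a))"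
    using prod.reindex_bij_betw[OF bij, of "\<lambda>a. S a a"]
      sum.reindex_bij_betw[OF bij, of "\<lambda>a. S i a * S a j / S a a"] by simp
  finally show ?thesis .
qed


lemma posdef_on_diag_pos:
  assumes "posdef_on N S" "finite N" "a \<in> N"
  shows "S a a > 0"
proof -
  let ?e = "\<lambda>i. if i = a then 1 else 0 :: real"
  have pd: "\<And>x. (\<exists>i\<in>N. x i \<noteq> 0) \<Longrightarrow> (\<Sum>i\<in>N. \<Sum>j\<in>N. x i * S i j * x j) > 0"
    using assms(1) unfolding posdef_on_def by blast
  have "(\<Sum>i\<in>N. \<Sum>j\<in>N. ?e i * S i j * ?e j) > 0"
    by (rule pd[of ?e]) (use assms(3) in auto)
  also have "(\<Sum>i\<in>N. \<Sum>j\<in>N. ?e i * S i j * ?e j) = (\<Sum>i\<in>N. if i = a then S a a else 0)"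
  proof (rule sum.cong[OF refl])
    fix i assume "i \<in> N"
    have "(\<Sum>j\<in>N. ?e i * S i j * ?e j) = (\<Sum>j\<in>N. if j = a then ?e i * S i a else 0)"
      by (rule sum.cong) auto
    then show "(\<Sum>j\<in>N. ?e i * S i j * ?e j) = (if i = a then S a a else 0)"
      using assms(2,3) by simp
  qed
  finally show ?thesis using assms(2,3) by simp
qed

section \<open>Subfields of the reals and field homomorphisms\<close>

lemma is_subfield_real_subfield_gen: "is_subfield_real (subfield_gen A)"
  unfolding subfield_gen_def is_subfield_real_def by auto

lemma subfield_gen_superset: "A \<subseteq> subfield_gen A"
  unfolding subfield_gen_def by auto

lemma subfield_gen_least: "is_subfield_real F \<Longrightarrow> A \<subseteq> F \<Longrightarrow> subfield_gen A \<subseteq> F"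
  unfolding subfield_gen_def by auto

lemma is_subfield_real_Rats: "is_subfield_real \<rat>"
  unfolding is_subfield_real_def by auto

context
  fixes F :: "real set"
  assumes F: "is_subfield_real F"
begin

lemma subfield_real_0: "0 \<in> F" and subfield_real_1: "1 \<in> F"
  and subfield_real_add: "x \<in> F \<Longrightarrow> y \<in> F \<Longrightarrow> x + y \<in> F"
  and subfield_real_mult: "x \<in> F \<Longrightarrow> y \<in> F \<Longrightarrow> x * y \<in> F"
  and subfield_real_uminus: "x \<in> F \<Longrightarrow> - x \<in> F"
  and subfield_real_inverse: "x \<in> F \<Longrightarrow> inverse x \<in> F"
  using F unfolding is_subfield_real_def by simp_all

lemma subfield_real_divide: "x \<in> F \<Longrightarrow> y \<in> F \<Longrightarrow> x / y \<in> F"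
  unfolding divide_inverse by (intro subfield_real_mult subfield_real_inverse)

lemma subfield_real_sum: "(\<And>i. i \<in> A \<Longrightarrow> f i \<in> F) \<Longrightarrow> sum f A \<in> F"
  by (induct A rule: infinite_finite_induct) (simp_all add: subfield_real_0 subfield_real_add)

lemma Rats_subset_subfield_real: "\<rat> \<subseteq> F"
proof
  fix r :: real assume "r \<in> \<rat>"
  then obtain a b :: int where r: "r = of_int a / of_int b"
    by (rule Rats_cases') simp
  have nat: "of_nat n \<in> F" for n
    by (induct n) (simp_all add: subfield_real_0 subfield_real_1 subfield_real_add)
  have int: "of_int z \<in> F" for z
  proof (cases "z \<ge> 0")
    case True then show ?thesis using nat[of "nat z"] by simp
  next
    case False then show ?thesis using subfield_real_uminus[OF nat[of "nat (- z)"]] by simp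
  qed
  show "r \<in> F" unfolding r by (intro subfield_real_divide int)
qed

end

context
  fixes e :: "'a::field \<Rightarrow> 'b::field"
  assumes e: "field_hom e"
begin

lemma field_hom_add: "e (x + y) = e x + e y"
  and field_hom_mult: "e (x * y) = e x * e y"
  using e unfolding field_hom_def by simp_all

lemma field_hom_0: "e 0 = 0"
  using field_hom_add[of 0 0] by (metis add.right_neutral add_left_cancel)

lemma field_hom_sum: "e (\<Sum>k\<in>A. f k) = (\<Sum>k\<in>A. e (f k))"
  by (induct A rule: infinite_finite_induct) (simp_all add: field_hom_0 field_hom_add)

lemma field_hom_of_int: "e (of_int z) = of_int z"
proof -
  have nat: "e (of_nat k) = of_nat k" for k
    using e unfolding field_hom_def by (induct k) (simp_all add: field_hom_0)
  have "e (- x) = - e x" for x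
  proof -
    have "e x + e (- x) = 0" using field_hom_add[of x "- x"] by (simp add: field_hom_0)
    from minus_unique[OF this] show ?thesis by simp
  qed
  then show ?thesis
    using nat by (cases z rule: int_cases2) simp_all
qed

lemma field_hom_nonzero: "x \<noteq> 0 \<Longrightarrow> e x \<noteq> 0"
  using field_hom_mult[of x "inverse x"] e unfolding field_hom_def by auto

end

section \<open>Encoding weighted orthogonality by CI constraints\<close>

text \<open>The weights stand for the diagonal entries of the coordinate block, which the CI
  constraints below cannot normalise.\<close>

definition orth_solution ::
    "'c set \<Rightarrow> (nat \<times> nat \<times> 'c set) set \<Rightarrow> (nat \<times> 'c) set \<Rightarrow> (nat \<Rightarrow> 'c \<Rightarrow> real) \<Rightarrow> ('c \<Rightarrow> real) \<Rightarrow> bool"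
  where "orth_solution C \<Phi> \<Psi> a w \<longleftrightarrow> (\<forall>t\<in>C. w t \<noteq> 0) \<and>
    (\<forall>(x, y, R)\<in>\<Phi>. (\<Sum>t\<in>R. a x t * a y t / w t) = 0) \<and> (\<forall>(x, t)\<in>\<Psi>. a x t \<noteq> 0)"

lemma quadratic_form_gram_plus_diag:
  fixes r :: "nat \<Rightarrow> 'c \<Rightarrow> real"
  assumes "finite N"
  shows "(\<Sum>u\<in>N. \<Sum>v\<in>N. z u * ((\<Sum>t\<in>C. r u t * r v t) + (if u = v then \<delta> u else 0)) * z v) =
    (\<Sum>t\<in>C. (\<Sum>u\<in>N. z u * r u t)\<^sup>2) + (\<Sum>u\<in>N. \<delta> u * (z u)\<^sup>2)"
proof -
  have "(\<Sum>u\<in>N. \<Sum>v\<in>N. z u * (\<Sum>t\<in>C. r u t * r v t) * z v) = (\<Sum>t\<in>C. (\<Sum>u\<in>N. z u * r u t)\<^sup>2)"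
  proof -
    have "(\<Sum>u\<in>N. \<Sum>v\<in>N. z u * (\<Sum>t\<in>C. r u t * r v t) * z v)
        = (\<Sum>u\<in>N. \<Sum>v\<in>N. \<Sum>t\<in>C. (z u * r u t) * (z v * r v t))"
      by (simp add: sum_distrib_left sum_distrib_right algebra_simps)
    also have "\<dots> = (\<Sum>t\<in>C. \<Sum>u\<in>N. \<Sum>v\<in>N. (z u * r u t) * (z v * r v t))"
      by (subst sum.swap, rule sum.cong[OF refl], rule sum.swap)
    also have "\<dots> = (\<Sum>t\<in>C. (\<Sum>u\<in>N. z u * r u t)\<^sup>2)"
      by (simp add: power2_eq_square sum_product)
    finally show ?thesis .
  qed
  moreover have "(\<Sum>u\<in>N. \<Sum>v\<in>N. z u * (if u = v then \<delta> u else 0) * z v) = (\<Sum>u\<in>N. \<delta> u * (z u)\<^sup>2)"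
  proof (rule sum.cong[OF refl])
    fix u assume "u \<in> N"
    have "(\<Sum>v\<in>N. z u * (if u = v then \<delta> u else 0) * z v) = (\<Sum>v\<in>N. if v = u then \<delta> u * (z u)\<^sup>2 else 0)"
      by (rule sum.cong) (auto simp: power2_eq_square)
    then show "(\<Sum>v\<in>N. z u * (if u = v then \<delta> u else 0) * z v) = \<delta> u * (z u)\<^sup>2"
      using assms \<open>u \<in> N\<close> by simp
  qed
  ultimately show ?thesis
    by (simp add: distrib_left distrib_right sum.distrib)
qed

locale ci_gadget =
  fixes d :: nat and C :: "'c::countable set"
    and \<Phi> :: "(nat \<times> nat \<times> 'c set) set" and \<Psi> :: "(nat \<times> 'c) set"
  assumes finite_C: "finite C" and finite_\<Phi>: "finite \<Phi>" and finite_\<Psi>: "finite \<Psi>"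
    and \<Phi>_wf: "\<And>x y R. (x, y, R) \<in> \<Phi> \<Longrightarrow> x < d \<and> y < d \<and> x \<noteq> y \<and> R \<subseteq> C"
    and \<Psi>_wf: "\<And>x t. (x, t) \<in> \<Psi> \<Longrightarrow> x < d \<and> t \<in> C"
begin

definition coord_var :: "'c \<Rightarrow> nat" where "coord_var t = d + to_nat t"

definition ground :: "nat set" where "ground = {..<d} \<union> coord_var ` C"

text \<open>The first family makes the coordinate block diagonal. Then the minor
  \<open>(x y | coord_var ` C')\<close> vanishes iff \<open>S x y\<close> is the weighted inner product of the rows
  \<open>x\<close> and \<open>y\<close> over \<open>C'\<close>; comparing \<open>C' = C\<close> with \<open>C' = C - R\<close> leaves orthogonality on \<open>R\<close>.\<close>

definition constraints :: "ci_constraint set" where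
  "constraints =
     (\<lambda>(s, t). CI (coord_var s) (coord_var t) {}) ` {(s, t) \<in> C \<times> C. s \<noteq> t}
   \<union> (\<lambda>(x, y, R). CI x y (coord_var ` C)) ` \<Phi>
   \<union> (\<lambda>(x, y, R). CI x y (coord_var ` (C - R))) ` \<Phi>
   \<union> (\<lambda>(x, t). NegCI x (coord_var t) {}) ` \<Psi>"

lemma coord_var_inject [simp]: "coord_var s = coord_var t \<longleftrightarrow> s = t"
  by (simp add: coord_var_def)

lemma coord_var_not_less [simp]: "\<not> coord_var t < d"
  by (simp add: coord_var_def)

lemma finite_ground: "finite ground"
  using finite_C by (simp add: ground_def)

lemma ground_iff: "u \<in> ground \<longleftrightarrow> u < d \<or> (\<exists>t\<in>C. u = coord_var t)"
  by (auto simp: ground_def)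

lemma finite_constraints: "finite constraints"
proof -
  have "finite {(s, t) \<in> C \<times> C. s \<noteq> t}"
    using finite_C by (auto intro: finite_subset[of _ "C \<times> C"])
  then show ?thesis
    using finite_\<Phi> finite_\<Psi> by (simp add: constraints_def)
qed

lemma constraints_wf: "c \<in> constraints \<Longrightarrow> ci_wf ground c"
  unfolding constraints_def using \<Phi>_wf \<Psi>_wf
  by (fastforce simp: ground_iff coord_var_def)

text \<open>The witness is \<open>V V\<^sup>T + D\<close>, where \<open>V\<close> has the rows \<open>c x\<close> and unit rows at the
  coordinates and \<open>D\<close> is the identity on the vector indices: it is positive definite, and its
  coordinate block is the identity.\<close>

definition gram_factor :: "(nat \<Rightarrow> 'c \<Rightarrow> real) \<Rightarrow> nat \<Rightarrow> 'c \<Rightarrow> real" where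
  "gram_factor c u t = (if u < d then c u t else if u = coord_var t then 1 else 0)"

definition gram :: "(nat \<Rightarrow> 'c \<Rightarrow> real) \<Rightarrow> cmat" where
  "gram c u v = (\<Sum>t\<in>C. gram_factor c u t * gram_factor c v t) +
     (if u = v then (if u < d then 1 else 0) else 0)"

lemma gram_coord_coord:
  "s \<in> C \<Longrightarrow> t \<in> C \<Longrightarrow> gram c (coord_var s) (coord_var t) = (if s = t then 1 else 0)"
  using finite_C by (simp add: gram_def gram_factor_def if_distrib[of "\<lambda>x. x * _"] cong: if_cong)

lemma gram_vec_vec: "x < d \<Longrightarrow> y < d \<Longrightarrow> gram c x y = (\<Sum>t\<in>C. c x t * c y t) + (if x = y then 1 else 0)"
  by (simp add: gram_def gram_factor_def)

lemma gram_vec_coord: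
  assumes "x < d" "t \<in> C"
  shows "gram c x (coord_var t) = c x t" "gram c (coord_var t) x = c x t"
proof -
  have "coord_var t \<noteq> x" using assms(1) coord_var_not_less by metis
  then show "gram c x (coord_var t) = c x t" "gram c (coord_var t) x = c x t"
    using assms finite_C by (simp_all add: gram_def gram_factor_def if_distrib[of "\<lambda>x. _ * x"]
        if_distrib[of "\<lambda>x. x * _"] cong: if_cong)
qed

lemma posdef_gram: "posdef_on ground (gram c)"
  unfolding posdef_on_def
proof (intro conjI allI impI)
  show "sym_on ground (gram c)"
    by (simp add: sym_on_def gram_def mult.commute)
  fix z :: "nat \<Rightarrow> real" assume nonzero: "\<exists>u\<in>ground. z u \<noteq> 0"
  let ?lin = "\<lambda>t. \<Sum>u\<in>ground. z u * gram_factor c u t" and ?\<delta> = "\<lambda>u. if u < d then 1 else 0 :: real"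
  have form: "(\<Sum>u\<in>ground. \<Sum>v\<in>ground. z u * gram c u v * z v) =
      (\<Sum>t\<in>C. (?lin t)\<^sup>2) + (\<Sum>u\<in>ground. ?\<delta> u * (z u)\<^sup>2)"
    unfolding gram_def by (rule quadratic_form_gram_plus_diag[OF finite_ground])
  have nonneg: "(\<Sum>t\<in>C. (?lin t)\<^sup>2) \<ge> 0" "(\<Sum>u\<in>ground. ?\<delta> u * (z u)\<^sup>2) \<ge> 0"
    by (simp_all add: sum_nonneg)
  show "(\<Sum>u\<in>ground. \<Sum>v\<in>ground. z u * gram c u v * z v) > 0"
  proof (rule ccontr)
    assume "\<not> ?thesis"
    then have "(\<Sum>t\<in>C. (?lin t)\<^sup>2) = 0" and "(\<Sum>u\<in>ground. ?\<delta> u * (z u)\<^sup>2) = 0"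
      using form nonneg by linarith+
    then have lin: "\<forall>t\<in>C. ?lin t = 0" and low: "\<forall>u\<in>ground. u < d \<longrightarrow> z u = 0"
      using finite_C finite_ground by (simp_all add: sum_nonneg_eq_0_iff split: if_splits)
    have "z (coord_var t) = 0" if "t \<in> C" for t
    proof -
      have "?lin t = (\<Sum>u\<in>ground. if u = coord_var t then z u else 0)"
        using low by (intro sum.cong) (auto simp: gram_factor_def)
      then show ?thesis
        using lin that finite_ground by (simp add: ground_iff)
    qed
    then show False
      using nonzero low by (auto simp: ground_iff)
  qed
qed

lemma ci_minor_gram:
  assumes xy: "x < d" "y < d" "x \<noteq> y" and C': "C' \<subseteq> C"
  shows "ci_minor (gram c) x y (coord_var ` C') = (\<Sum>t\<in>C - C'. c x t * c y t)"
proof -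
  have finite_C': "finite C'" using C' finite_C by (rule finite_subset)
  have "ci_minor (gram c) x y (coord_var ` C') = (\<Prod>u\<in>coord_var ` C'. gram c u u) *
      (gram c x y - (\<Sum>u\<in>coord_var ` C'. gram c x u * gram c u y / gram c u u))"
    using finite_C' by (intro ci_minor_diagonal_block)
      (auto simp: gram_coord_coord[OF subsetD[OF C'] subsetD[OF C']])
  also have "\<dots> = gram c x y - (\<Sum>t\<in>C'. c x t * c y t)"
  proof -
    have in_C: "t \<in> C" if "t \<in> C'" for t using that C' by blast
    have "(\<Prod>t\<in>C'. gram c (coord_var t) (coord_var t)) = 1"
      "(\<Sum>t\<in>C'. gram c x (coord_var t) * gram c (coord_var t) y / gram c (coord_var t) (coord_var t))
        = (\<Sum>t\<in>C'. c x t * c y t)"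
      by (auto intro!: prod.neutral sum.cong simp: in_C gram_coord_coord gram_vec_coord xy)
    then show ?thesis by (simp add: sum.reindex prod.reindex inj_on_def)
  qed
  also have "\<dots> = (\<Sum>t\<in>C - C'. c x t * c y t)"
    using xy C' finite_C by (simp add: gram_vec_vec sum_diff)
  finally show ?thesis .
qed

lemma gram_in_model:
  assumes "orth_solution C \<Phi> \<Psi> c (\<lambda>_. 1)"
  shows "gram c \<in> gauss_model ground constraints"
  unfolding gauss_model_def
proof (intro CollectI conjI posdef_gram ballI)
  have orth: "(\<Sum>t\<in>R. c x t * c y t) = 0" if "(x, y, R) \<in> \<Phi>" for x y R
    using assms that unfolding orth_solution_def by fastforce
  have nonzero: "c x t \<noteq> 0" if "(x, t) \<in> \<Psi>" for x t
    using assms that unfolding orth_solution_def by fastforce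
  fix k assume "k \<in> constraints"
  then consider
      (coord_coord) s t where "k = CI (coord_var s) (coord_var t) {}" "s \<in> C" "t \<in> C" "s \<noteq> t"
    | (full) x y R where "k = CI x y (coord_var ` C)" "(x, y, R) \<in> \<Phi>"
    | (partial) x y R where "k = CI x y (coord_var ` (C - R))" "(x, y, R) \<in> \<Phi>"
    | (negated) x t where "k = NegCI x (coord_var t) {}" "(x, t) \<in> \<Psi>"
    unfolding constraints_def by auto
  then show "ci_sat (gram c) k"
  proof cases
    case coord_coord
    then show ?thesis by (simp add: ci_minor_empty gram_coord_coord)
  next
    case full
    then show ?thesis using \<Phi>_wf by (simp add: ci_minor_gram)
  next
    case partial
    moreover from partial have "R \<subseteq> C" using \<Phi>_wf by blast
    then have "C - (C - R) = R" by blast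
    ultimately show ?thesis using \<Phi>_wf orth by (simp add: ci_minor_gram)
  next
    case negated
    then show ?thesis using \<Psi>_wf nonzero by (simp add: ci_minor_empty gram_vec_coord)
  qed
qed

context
  fixes S assumes S: "S \<in> gauss_model ground constraints"
begin

lemma model_sat: "k \<in> constraints \<Longrightarrow> ci_sat S k"
  using S unfolding gauss_model_def by blast

lemma model_coord_diag_pos: "t \<in> C \<Longrightarrow> S (coord_var t) (coord_var t) > 0"
  using S finite_ground unfolding gauss_model_def
  by (auto intro: posdef_on_diag_pos simp: ground_iff)

lemma model_coord_coord: "s \<in> C \<Longrightarrow> t \<in> C \<Longrightarrow> s \<noteq> t \<Longrightarrow> S (coord_var s) (coord_var t) = 0"
  using model_sat[of "CI (coord_var s) (coord_var t) {}"]
  by (force simp: constraints_def ci_minor_empty)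

lemma model_coord_vec_sym: "x < d \<Longrightarrow> t \<in> C \<Longrightarrow> S (coord_var t) x = S x (coord_var t)"
  using S unfolding gauss_model_def posdef_on_def sym_on_def by (auto simp: ground_iff)

lemma model_schur_complement:
  assumes xy: "x < d" "y < d" and C': "C' \<subseteq> C" and minor: "ci_minor S x y (coord_var ` C') = 0"
  shows "S x y = (\<Sum>t\<in>C'. S x (coord_var t) * S y (coord_var t) / S (coord_var t) (coord_var t))"
proof -
  have in_C: "t \<in> C" if "t \<in> C'" for t using that C' by blast
  have finite_C': "finite C'" using C' finite_C by (rule finite_subset)
  have "S u u \<noteq> 0" if "u \<in> coord_var ` C'" for u
    using that in_C model_coord_diag_pos by fastforce
  then have diag_nonzero: "(\<Prod>u\<in>coord_var ` C'. S u u) \<noteq> 0"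
    using finite_C' by (simp add: prod_zero_iff)
  have "ci_minor S x y (coord_var ` C') = (\<Prod>u\<in>coord_var ` C'. S u u) *
      (S x y - (\<Sum>u\<in>coord_var ` C'. S x u * S u y / S u u))"
    using finite_C' \<open>\<And>u. u \<in> coord_var ` C' \<Longrightarrow> S u u \<noteq> 0\<close>
    by (intro ci_minor_diagonal_block) (auto simp: in_C model_coord_coord)
  then have "S x y = (\<Sum>u\<in>coord_var ` C'. S x u * S u y / S u u)"
    using minor diag_nonzero by simp
  also have "\<dots> = (\<Sum>t\<in>C'. S x (coord_var t) * S y (coord_var t) / S (coord_var t) (coord_var t))"
    by (simp add: sum.reindex inj_on_def in_C model_coord_vec_sym xy cong: sum.cong)
  finally show ?thesis .
qed

lemma model_orth_solution:
  "orth_solution C \<Phi> \<Psi> (\<lambda>x t. S x (coord_var t)) (\<lambda>t. S (coord_var t) (coord_var t))"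
proof -
  have orth: "(\<Sum>t\<in>R. S x (coord_var t) * S y (coord_var t) / S (coord_var t) (coord_var t)) = 0"
    if xyR: "(x, y, R) \<in> \<Phi>" for x y R
  proof -
    have wf: "x < d" "y < d" "R \<subseteq> C" using \<Phi>_wf[OF xyR] by blast+
    let ?f = "\<lambda>t. S x (coord_var t) * S y (coord_var t) / S (coord_var t) (coord_var t)"
    have "ci_minor S x y (coord_var ` C) = 0" and "ci_minor S x y (coord_var ` (C - R)) = 0"
      using xyR model_sat by (force simp: constraints_def)+
    then have "S x y = sum ?f C" and "S x y = sum ?f (C - R)"
      by (intro model_schur_complement wf; blast)+
    moreover have "sum ?f C = sum ?f (C - R) + sum ?f R"
      using wf(3) finite_C by (rule sum.subset_diff)
    ultimately show ?thesis by simp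
  qed
  have "S x (coord_var t) \<noteq> 0" if "(x, t) \<in> \<Psi>" for x t
    using that model_sat by (force simp: constraints_def ci_minor_empty)
  moreover have "S (coord_var t) (coord_var t) \<noteq> 0" if "t \<in> C" for t
    using model_coord_diag_pos[OF that] by simp
  ultimately show ?thesis
    unfolding orth_solution_def using orth by auto
qed

end

theorem ci_model_of_orth_solution:
  assumes "orth_solution C \<Phi> \<Psi> c (\<lambda>_. 1)"
  shows "\<exists>N I. finite N \<and> finite I \<and> (\<forall>k\<in>I. ci_wf N k) \<and> gauss_model N I \<noteq> {} \<and>
    (\<forall>S\<in>gauss_model N I. \<exists>a w. orth_solution C \<Phi> \<Psi> a w \<and>
       (\<forall>x<d. \<forall>t\<in>C. a x t \<in> entries_on N S \<and> w t \<in> entries_on N S))"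
proof (intro exI[of _ ground] exI[of _ constraints] conjI ballI)
  show "gauss_model ground constraints \<noteq> {}"
    using gram_in_model[OF assms] by blast
  fix S assume "S \<in> gauss_model ground constraints"
  then show "\<exists>a w. orth_solution C \<Phi> \<Psi> a w \<and>
      (\<forall>x<d. \<forall>t\<in>C. a x t \<in> entries_on ground S \<and> w t \<in> entries_on ground S)"
    by (intro exI[of _ "\<lambda>x t. S x (coord_var t)"] exI[of _ "\<lambda>t. S (coord_var t) (coord_var t)"] conjI
        model_orth_solution) (auto simp: entries_on_def ground_iff)
qed (simp_all add: finite_ground finite_constraints constraints_wf)

end

section \<open>Encoding multiplication tables by weighted orthogonality\<close>

definition mult_table :: "nat \<Rightarrow> (nat \<Rightarrow> nat \<Rightarrow> nat \<Rightarrow> int) \<Rightarrow> (nat \<Rightarrow> 'a::comm_ring_1) \<Rightarrow> bool" where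
  "mult_table n m v \<longleftrightarrow> (\<forall>i<n. \<forall>j<n. v i * v j = (\<Sum>k<n. of_int (m i j k) * v k))"

datatype table_coord = Pivot | Neg | Gen nat | Aux nat | Prod nat nat | Term nat nat nat nat

instance table_coord :: countable
  by countable_datatype

definition table_terms :: "nat \<Rightarrow> (nat \<Rightarrow> nat \<Rightarrow> nat \<Rightarrow> int) \<Rightarrow> nat \<Rightarrow> nat \<Rightarrow> table_coord set" where
  "table_terms n m i j = (\<lambda>(k, c). Term i j k c) ` (SIGMA k:{..<n}. {..<nat \<bar>m i j k\<bar>})"

definition table_coords :: "nat \<Rightarrow> (nat \<Rightarrow> nat \<Rightarrow> nat \<Rightarrow> int) \<Rightarrow> table_coord set" where
  "table_coords n m = {Pivot, Neg} \<union> Gen ` {..<n} \<union> Aux ` {..<n} \<union>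
     (\<Union>i<n. \<Union>j<n. insert (Prod i j) (table_terms n m i j))"

fun coord_sign :: "(nat \<Rightarrow> nat \<Rightarrow> nat \<Rightarrow> int) \<Rightarrow> table_coord \<Rightarrow> real" where
  "coord_sign m Pivot = 1"
| "coord_sign m Neg = -1"
| "coord_sign m (Gen k) = 1"
| "coord_sign m (Aux j) = 1"
| "coord_sign m (Prod i j) = -1"
| "coord_sign m (Term i j k c) = - of_int (sgn (m i j k))"

text \<open>Row 0 is a gauge row and row 1 a sign row: the relations \<open>sign_neg\<close> and \<open>sign_pos\<close>
  force it to be \<open>coord_sign\<close>. Row 2 carries the values: \<open>y\<^sub>k\<close> at \<open>Gen k\<close>, a copy of \<open>y\<^sub>i\<close> at
  \<open>Prod i j\<close> and a copy of \<open>sgn (m i j k) y\<^sub>k\<close> at each of the \<open>\<bar>m i j k\<bar>\<close> coordinates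
  \<open>Term i j k c\<close>. Row 3 is \<open>-1\<close> on the terms and \<open>y\<^sub>j\<close> at \<open>Prod i j\<close>, so that \<open>product\<close>
  expresses \<open>y\<^sub>i y\<^sub>j = \<Sum>\<^sub>k m i j k y\<^sub>k\<close>.\<close>

inductive_set table_orth :: "nat \<Rightarrow> (nat \<Rightarrow> nat \<Rightarrow> nat \<Rightarrow> int) \<Rightarrow> (nat \<times> nat \<times> table_coord set) set"
  for n m where
  sign_neg: "t \<in> table_coords n m \<Longrightarrow> coord_sign m t = -1 \<Longrightarrow> (0, 1, {Pivot, t}) \<in> table_orth n m"
| sign_pos: "t \<in> table_coords n m \<Longrightarrow> t \<noteq> Pivot \<Longrightarrow> coord_sign m t = 1 \<Longrightarrow>
    (0, 1, {t, Neg}) \<in> table_orth n m"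
| prod_value: "i < n \<Longrightarrow> j < n \<Longrightarrow> (2, 1, {Prod i j, Gen i}) \<in> table_orth n m"
| term_value: "i < n \<Longrightarrow> j < n \<Longrightarrow> Term i j k c \<in> table_terms n m i j \<Longrightarrow>
    (2, 1, {Term i j k c, Gen k}) \<in> table_orth n m"
| aux_value: "j < n \<Longrightarrow> (2, 1, {Pivot, Aux j}) \<in> table_orth n m"
| gen_partner: "j < n \<Longrightarrow> (0, 3, {Pivot, Gen j}) \<in> table_orth n m"
| term_partner: "i < n \<Longrightarrow> j < n \<Longrightarrow> t \<in> table_terms n m i j \<Longrightarrow> (0, 3, {Pivot, t}) \<in> table_orth n m"
| prod_partner: "i < n \<Longrightarrow> j < n \<Longrightarrow> (0, 3, {Prod i j, Aux j}) \<in> table_orth n m"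
| aux_partner: "j < n \<Longrightarrow> (2, 3, {Gen j, Aux j}) \<in> table_orth n m"
| product: "i < n \<Longrightarrow> j < n \<Longrightarrow> (2, 3, insert (Prod i j) (table_terms n m i j)) \<in> table_orth n m"

definition table_nonzero :: "nat \<Rightarrow> (nat \<Rightarrow> nat \<Rightarrow> nat \<Rightarrow> int) \<Rightarrow> nat \<Rightarrow> (nat \<times> table_coord) set" where
  "table_nonzero n m k0 =
     Pair 0 ` table_coords n m \<union> {(1, Pivot), (2, Pivot), (3, Pivot), (2, Gen k0)}"

lemma mem_table_terms_iff:
  "t \<in> table_terms n m i j \<longleftrightarrow> (\<exists>k c. t = Term i j k c \<and> k < n \<and> c < nat \<bar>m i j k\<bar>)"
  by (auto simp: table_terms_def)

lemma Prod_notin_table_terms: "Prod i' j' \<notin> table_terms n m i j"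
  by (auto simp: table_terms_def)

lemma finite_table_terms: "finite (table_terms n m i j)"
  by (simp add: table_terms_def)

lemma finite_table_coords: "finite (table_coords n m)"
  by (simp add: table_coords_def finite_table_terms)

lemma sum_table_terms: "(\<Sum>t\<in>table_terms n m i j. f t) = (\<Sum>k<n. \<Sum>c<nat \<bar>m i j k\<bar>. f (Term i j k c))"
proof -
  have "inj_on (\<lambda>(k, c). Term i j k c) (SIGMA k:{..<n}. {..<nat \<bar>m i j k\<bar>})"
    by (auto simp: inj_on_def)
  then show ?thesis
    by (simp add: table_terms_def sum.reindex sum.Sigma case_prod_unfold)
qed

lemma table_coordsI:
  "Pivot \<in> table_coords n m" "Neg \<in> table_coords n m"
  "k < n \<Longrightarrow> Gen k \<in> table_coords n m" "k < n \<Longrightarrow> Aux k \<in> table_coords n m"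
  "i < n \<Longrightarrow> j < n \<Longrightarrow> Prod i j \<in> table_coords n m"
  "i < n \<Longrightarrow> j < n \<Longrightarrow> t \<in> table_terms n m i j \<Longrightarrow> t \<in> table_coords n m"
  by (auto simp: table_coords_def)

lemma coord_sign_cases: "t \<in> table_coords n m \<Longrightarrow> coord_sign m t = 1 \<or> coord_sign m t = -1"
  by (auto simp: table_coords_def mem_table_terms_iff sgn_if)

lemma table_orth_wf: "(x, y, R) \<in> table_orth n m \<Longrightarrow> x < 4 \<and> y < 4 \<and> x \<noteq> y \<and> R \<subseteq> table_coords n m"
  by (erule table_orth.cases) (auto intro: table_coordsI simp: mem_table_terms_iff)

lemma table_orth_rows: "(x, y, R) \<in> table_orth n m \<Longrightarrow> y = 1 \<or> y = 3"
  by (erule table_orth.cases) simp_all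

lemma finite_table_orth: "finite (table_orth n m)"
proof (rule finite_subset)
  show "table_orth n m \<subseteq> {..<4} \<times> {..<4} \<times> Pow (table_coords n m)"
    using table_orth_wf by fastforce
qed (simp add: finite_table_coords)

lemma finite_table_nonzero: "finite (table_nonzero n m k0)"
  by (simp add: table_nonzero_def finite_table_coords)

lemma table_nonzero_wf: "k0 < n \<Longrightarrow> (x, t) \<in> table_nonzero n m k0 \<Longrightarrow> x < 4 \<and> t \<in> table_coords n m"
  by (auto simp: table_nonzero_def table_coords_def)

lemma abs_of_int_times_sgn: "\<bar>of_int z\<bar> * (of_int (sgn z) :: 'a::linordered_idom) = of_int z"
  by (simp add: sgn_if)

fun value_row :: "(nat \<Rightarrow> real) \<Rightarrow> (nat \<Rightarrow> nat \<Rightarrow> nat \<Rightarrow> int) \<Rightarrow> table_coord \<Rightarrow> real" where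
  "value_row x m Pivot = 1"
| "value_row x m Neg = 0"
| "value_row x m (Gen k) = x k"
| "value_row x m (Aux j) = -1"
| "value_row x m (Prod i j) = x i"
| "value_row x m (Term i j k c) = of_int (sgn (m i j k)) * x k"

fun partner_row :: "(nat \<Rightarrow> real) \<Rightarrow> table_coord \<Rightarrow> real" where
  "partner_row x Pivot = 1"
| "partner_row x Neg = 0"
| "partner_row x (Gen k) = -1"
| "partner_row x (Aux j) = - x j"
| "partner_row x (Prod i j) = x j"
| "partner_row x (Term i j k c) = -1"

definition table_witness :: "(nat \<Rightarrow> real) \<Rightarrow> (nat \<Rightarrow> nat \<Rightarrow> nat \<Rightarrow> int) \<Rightarrow> nat \<Rightarrow> table_coord \<Rightarrow> real" where
  "table_witness x m v = (if v = 0 then (\<lambda>_. 1) else if v = 1 then coord_sign m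
     else if v = 2 then value_row x m else partner_row x)"

lemma table_witness_simps [simp]:
  "table_witness x m 0 = (\<lambda>_. 1)" "table_witness x m (Suc 0) = coord_sign m"
  "table_witness x m 2 = value_row x m" "table_witness x m 3 = partner_row x"
  by (simp_all add: table_witness_def)

lemma table_witness_orth_rel:
  assumes table: "mult_table n m x" and rel: "(v, u, R) \<in> table_orth n m"
  shows "(\<Sum>t\<in>R. table_witness x m v t * table_witness x m u t) = 0"
proof -
  have product_sum:
    "(\<Sum>t\<in>insert (Prod i j) (table_terms n m i j). value_row x m t * partner_row x t) = 0"
    if "i < n" "j < n" for i j
  proof -
    have "(\<Sum>t\<in>table_terms n m i j. value_row x m t * partner_row x t)
        = (\<Sum>k<n. - (\<bar>of_int (m i j k)\<bar> * of_int (sgn (m i j k)) * x k))"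
      by (simp add: sum_table_terms mult.assoc)
    also have "\<dots> = - (x i * x j)"
      using table that by (simp add: mult_table_def abs_of_int_times_sgn sum_negf)
    finally show ?thesis
      by (simp add: finite_table_terms Prod_notin_table_terms)
  qed
  have sgn_square: "of_int (sgn z) * of_int (sgn z) = (1::real)" if "z \<noteq> 0" for z :: int
    using that by (simp add: sgn_if)
  from rel show ?thesis
    by cases (auto simp: product_sum sgn_square mem_table_terms_iff sum.insert_if)
qed

lemma table_witness_orth:
  assumes "mult_table n m x" and "x k0 \<noteq> 0"
  shows "orth_solution (table_coords n m) (table_orth n m) (table_nonzero n m k0)
    (table_witness x m) (\<lambda>_. 1)"
  using assms table_witness_orth_rel unfolding orth_solution_def
  by (auto simp: table_nonzero_def)

locale table_orth_solution =
  fixes n :: nat and m :: "nat \<Rightarrow> nat \<Rightarrow> nat \<Rightarrow> int" and k0 :: nat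
    and a :: "nat \<Rightarrow> table_coord \<Rightarrow> real" and w :: "table_coord \<Rightarrow> real"
  assumes sol: "orth_solution (table_coords n m) (table_orth n m) (table_nonzero n m k0) a w"
    and k0: "k0 < n"
begin

text \<open>Solutions may be rescaled row by row and, together with the weights, coordinate by
  coordinate; normalising by row 0 and by the coordinate \<open>Pivot\<close> removes this freedom.\<close>

definition normal_value :: "table_coord \<Rightarrow> real" where
  "normal_value t = (a 2 t / a 0 t) / (a 2 Pivot / a 0 Pivot)"

definition normal_row :: "nat \<Rightarrow> table_coord \<Rightarrow> real" where
  "normal_row q t = (a 0 t * a q t / w t) / (a 0 Pivot * a q Pivot / w Pivot)"

lemma weight_nonzero: "t \<in> table_coords n m \<Longrightarrow> w t \<noteq> 0"
  using sol by (simp add: orth_solution_def)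

lemma orth_rel: "(x, y, R) \<in> table_orth n m \<Longrightarrow> (\<Sum>t\<in>R. a x t * a y t / w t) = 0"
  using sol unfolding orth_solution_def by fast

lemma entry_nonzero: "(x, t) \<in> table_nonzero n m k0 \<Longrightarrow> a x t \<noteq> 0"
  using sol unfolding orth_solution_def by fast

lemma row0_nonzero: "t \<in> table_coords n m \<Longrightarrow> a 0 t \<noteq> 0"
  by (rule entry_nonzero) (simp add: table_nonzero_def)

lemma pivot_nonzero: "a 1 Pivot \<noteq> 0" "a 2 Pivot \<noteq> 0" "a 3 Pivot \<noteq> 0" "a 0 Pivot \<noteq> 0" "w Pivot \<noteq> 0"
  using entry_nonzero[of 1 Pivot] entry_nonzero[of 2 Pivot] entry_nonzero[of 3 Pivot]
    row0_nonzero[OF table_coordsI(1)] weight_nonzero[OF table_coordsI(1)]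
  by (simp_all add: table_nonzero_def)

lemma sum_normal_row:
  assumes "(0, q, R) \<in> table_orth n m"
  shows "(\<Sum>t\<in>R. normal_row q t) = 0"
proof -
  have "(\<Sum>t\<in>R. normal_row q t) = (\<Sum>t\<in>R. a 0 t * a q t / w t) / (a 0 Pivot * a q Pivot / w Pivot)"
    unfolding normal_row_def by (rule sum_divide_distrib[symmetric])
  then show ?thesis using orth_rel[OF assms] by simp
qed

lemma sum_normal_value_row:
  assumes rel: "(2, q, R) \<in> table_orth n m"
  shows "(\<Sum>t\<in>R. normal_value t * normal_row q t) = 0"
proof -
  have R: "R \<subseteq> table_coords n m" and "q = 1 \<or> q = 3"
    using table_orth_wf[OF rel] table_orth_rows[OF rel] by blast+
  then have "a q Pivot \<noteq> 0" using pivot_nonzero by auto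
  have "normal_value t * normal_row q t = (a 2 t * a q t / w t) / (a 2 Pivot * a q Pivot / w Pivot)"
    if "t \<in> R" for t
  proof -
    have "a 0 t \<noteq> 0" "w t \<noteq> 0" using that R row0_nonzero weight_nonzero by blast+
    then show ?thesis
      using pivot_nonzero \<open>a q Pivot \<noteq> 0\<close> by (simp add: normal_value_def normal_row_def field_simps)
  qed
  then have "(\<Sum>t\<in>R. normal_value t * normal_row q t)
      = (\<Sum>t\<in>R. (a 2 t * a q t / w t) / (a 2 Pivot * a q Pivot / w Pivot))"
    by (rule sum.cong[OF refl])
  also have "\<dots> = (\<Sum>t\<in>R. a 2 t * a q t / w t) / (a 2 Pivot * a q Pivot / w Pivot)"
    by (rule sum_divide_distrib[symmetric])
  finally show ?thesis
    using orth_rel[OF rel] by simp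
qed

lemma normal_value_Pivot: "normal_value Pivot = 1"
  and normal_row_Pivot: "q \<in> {1, 3} \<Longrightarrow> normal_row q Pivot = 1"
  using pivot_nonzero by (auto simp: normal_value_def normal_row_def)

lemma normal_row_Neg: "normal_row 1 Neg = -1"
  using sum_normal_row[OF table_orth.sign_neg[OF table_coordsI(2)]] normal_row_Pivot by simp

lemma normal_row_sign:
  assumes t: "t \<in> table_coords n m"
  shows "normal_row 1 t = coord_sign m t"
proof (cases "t = Pivot")
  case False
  show ?thesis
  proof (cases "coord_sign m t = -1")
    case True
    then show ?thesis
      using sum_normal_row[OF table_orth.sign_neg[OF t True]] normal_row_Pivot False by simp
  next
    case sign: False
    then have "coord_sign m t = 1" using coord_sign_cases[OF t] by simp
    moreover from this have "t \<noteq> Neg" by auto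
    ultimately show ?thesis
      using sum_normal_row[OF table_orth.sign_pos[OF t False]] normal_row_Neg by simp
  qed
qed (simp add: normal_row_Pivot)

context
  fixes i j assumes ij: "i < n" "j < n"
begin

lemma normal_value_Prod: "normal_value (Prod i j) = normal_value (Gen i)"
  using sum_normal_value_row[OF table_orth.prod_value[OF ij]]
    normal_row_sign[OF table_coordsI(5)[OF ij]] normal_row_sign[OF table_coordsI(3)[OF ij(1)]]
  by simp

lemma normal_value_Term:
  assumes t: "Term i j k c \<in> table_terms n m i j"
  shows "normal_value (Term i j k c) = of_int (sgn (m i j k)) * normal_value (Gen k)"
proof -
  have "k < n" "m i j k \<noteq> 0" using t by (auto simp: mem_table_terms_iff)
  moreover have "normal_value (Term i j k c) * - of_int (sgn (m i j k)) + normal_value (Gen k) = 0"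
    using sum_normal_value_row[OF table_orth.term_value[OF ij t]]
      normal_row_sign[OF table_coordsI(6)[OF ij t]] normal_row_sign[OF table_coordsI(3)[OF \<open>k < n\<close>]]
    by simp
  ultimately show ?thesis
    by (auto simp: sgn_if)
qed

lemma normal_row_table_terms: "t \<in> table_terms n m i j \<Longrightarrow> normal_row 3 t = -1"
  using sum_normal_row[OF table_orth.term_partner[OF ij]] normal_row_Pivot[of 3]
  by (force simp: mem_table_terms_iff)

end

context
  fixes j assumes j: "j < n"
begin

lemma normal_value_Aux: "normal_value (Aux j) = -1"
  using sum_normal_value_row[OF table_orth.aux_value[OF j]] normal_value_Pivot
    normal_row_sign[OF table_coordsI(1)] normal_row_sign[OF table_coordsI(4)[OF j]]
  by simp

lemma normal_row_Gen: "normal_row 3 (Gen j) = -1"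
  using sum_normal_row[OF table_orth.gen_partner[OF j]] normal_row_Pivot by simp

lemma normal_row_Aux: "normal_row 3 (Aux j) = - normal_value (Gen j)"
  using sum_normal_value_row[OF table_orth.aux_partner[OF j]] normal_value_Aux normal_row_Gen by simp

lemma normal_row_Prod: "i < n \<Longrightarrow> normal_row 3 (Prod i j) = normal_value (Gen j)"
  using sum_normal_row[OF table_orth.prod_partner[OF _ j]] normal_row_Aux by simp

end

lemma mult_table_normal_value: "mult_table n m (\<lambda>k. normal_value (Gen k))"
  unfolding mult_table_def
proof (intro allI impI)
  fix i j assume ij: "i < n" "j < n"
  have "(\<Sum>t\<in>table_terms n m i j. normal_value t * normal_row 3 t)
      = (\<Sum>k<n. \<Sum>c<nat \<bar>m i j k\<bar>. - (of_int (sgn (m i j k)) * normal_value (Gen k)))"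
    using ij
    by (simp add: sum_table_terms mem_table_terms_iff normal_value_Term normal_row_table_terms)
  also have "\<dots> = - (\<Sum>k<n. of_int (m i j k) * normal_value (Gen k))"
    by (simp add: abs_of_int_times_sgn mult.assoc[symmetric] sum_negf)
  finally show "normal_value (Gen i) * normal_value (Gen j) =
      (\<Sum>k<n. of_int (m i j k) * normal_value (Gen k))"
    using sum_normal_value_row[OF table_orth.product[OF ij]] ij
    by (simp add: finite_table_terms Prod_notin_table_terms normal_value_Prod normal_row_Prod)
qed

lemma normal_value_Gen_nonzero: "normal_value (Gen k0) \<noteq> 0"
  using pivot_nonzero row0_nonzero[OF table_coordsI(3)[OF k0]] entry_nonzero[of 2 "Gen k0"]
  by (simp add: normal_value_def table_nonzero_def)

end

theorem ci_model_realizing_table: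
  fixes x :: "nat \<Rightarrow> real"
  assumes k0: "k0 < n" and x: "mult_table n m x" "x k0 \<noteq> 0"
  shows "\<exists>N I. finite N \<and> finite I \<and> (\<forall>c\<in>I. ci_wf N c) \<and> gauss_model N I \<noteq> {} \<and>
    (\<forall>S\<in>gauss_model N I. \<exists>y. (\<forall>k<n. y k \<in> subfield_gen (entries_on N S)) \<and> y k0 \<noteq> 0 \<and>
       mult_table n m y)"
proof -
  interpret ci_gadget 4 "table_coords n m" "table_orth n m" "table_nonzero n m k0"
    using finite_table_coords finite_table_orth finite_table_nonzero
      table_orth_wf table_nonzero_wf[OF k0]
    by unfold_locales blast+
  obtain N I where NI: "finite N" "finite I" "\<forall>c\<in>I. ci_wf N c" "gauss_model N I \<noteq> {}"
    and solution: "\<forall>S\<in>gauss_model N I. \<exists>a w.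
      orth_solution (table_coords n m) (table_orth n m) (table_nonzero n m k0) a w \<and>
      (\<forall>v<4. \<forall>t\<in>table_coords n m. a v t \<in> entries_on N S \<and> w t \<in> entries_on N S)"
    using ci_model_of_orth_solution[OF table_witness_orth[OF x]] by auto
  have "\<exists>y. (\<forall>k<n. y k \<in> subfield_gen (entries_on N S)) \<and> y k0 \<noteq> 0 \<and> mult_table n m y"
    if S: "S \<in> gauss_model N I" for S
  proof -
    obtain a w
      where sol: "orth_solution (table_coords n m) (table_orth n m) (table_nonzero n m k0) a w"
      and entries: "\<forall>v<4. \<forall>t\<in>table_coords n m. a v t \<in> entries_on N S \<and> w t \<in> entries_on N S"
      using solution S by blast
    have in_F: "a v t \<in> subfield_gen (entries_on N S)" if "v < 4" "t \<in> table_coords n m" for v t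
      using entries that subfield_gen_superset by blast
    interpret table_orth_solution n m k0 a w
      using sol k0 by unfold_locales
    have "normal_value (Gen k) \<in> subfield_gen (entries_on N S)" if "k < n" for k
      unfolding normal_value_def using that
      by (intro subfield_real_divide[OF is_subfield_real_subfield_gen] in_F table_coordsI) auto
    then show ?thesis
      using mult_table_normal_value normal_value_Gen_nonzero
      by (intro exI[of _ "\<lambda>k. normal_value (Gen k)"]) simp
  qed
  with NI show ?thesis by (intro exI[of _ N] exI[of _ I]) simp
qed

section \<open>Finite extensions of the rationals\<close>

definition rat_basis :: "nat \<Rightarrow> (nat \<Rightarrow> 'k::field_char_0) \<Rightarrow> bool" where
  "rat_basis n \<beta> \<longleftrightarrow> (\<forall>x. \<exists>c. x = (\<Sum>k<n. of_rat (c k) * \<beta> k)) \<and>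
     (\<forall>c. (\<Sum>k<n. of_rat (c k) * \<beta> k) = 0 \<longrightarrow> (\<forall>k<n. c k = 0))"

lemma rat_basis_exists:
  assumes "finite_over_rat TYPE('k::field_char_0)"
  shows "\<exists>n (\<beta> :: nat \<Rightarrow> 'k). rat_basis n \<beta>"
proof -
  interpret Q: vector_space "\<lambda>r (x::'k). of_rat r * x"
    by unfold_locales (simp_all add: algebra_simps of_rat_add of_rat_mult)
  obtain B0 :: "'k set" where "finite B0" and "\<forall>x. \<exists>c. x = (\<Sum>b\<in>B0. of_rat (c b) * b)"
    using assms unfolding finite_over_rat_def by blast
  then have B0: "UNIV \<subseteq> Q.span B0"
    by (auto simp: Q.span_finite)
  obtain B where "Q.independent B" and span: "UNIV \<subseteq> Q.span B"
    using Q.maximal_independent_subset[of UNIV] by blast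
  then have "finite B"
    using Q.independent_span_bound[OF \<open>finite B0\<close>] B0 by blast
  then obtain bs where bs: "distinct bs" "set bs = B"
    using finite_distinct_list by blast
  define n where "n = length bs"
  have bij: "bij_betw ((!) bs) {..<n} B"
    using bij_betw_nth[OF bs(1)] bs(2) n_def by simp
  have "\<exists>c. x = (\<Sum>k<n. of_rat (c k) * bs ! k)" for x
  proof -
    obtain u where "x = (\<Sum>b\<in>B. of_rat (u b) * b)"
      using span \<open>finite B\<close> by (auto simp: Q.span_finite)
    then show ?thesis
      using sum.reindex_bij_betw[OF bij, of "\<lambda>b. of_rat (u b) * b"]
      by (intro exI[of _ "\<lambda>k. u (bs ! k)"]) simp
  qed
  moreover have "\<forall>k<n. c k = 0" if "(\<Sum>k<n. of_rat (c k) * bs ! k) = 0" for c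
  proof -
    define u where "u b = c (inv_into {..<n} ((!) bs) b)" for b
    have "(\<Sum>b\<in>B. of_rat (u b) * b) = 0"
      using that sum.reindex_bij_betw[OF bij, of "\<lambda>b. of_rat (u b) * b"] bij
      by (simp add: u_def bij_betw_def inv_into_f_f)
    then have "\<forall>b\<in>B. u b = 0"
      using \<open>Q.independent B\<close> \<open>finite B\<close> Q.independentD[of B B] by blast
    then show ?thesis
      using bij by (auto simp: u_def bij_betw_def inv_into_f_f)
  qed
  ultimately have "rat_basis n ((!) bs)"
    unfolding rat_basis_def by blast
  then show ?thesis by blast
qed

lemma rat_basis_independent:
  "rat_basis n \<beta> \<Longrightarrow> (\<Sum>k<n. of_rat (c k) * \<beta> k) = 0 \<Longrightarrow> k < n \<Longrightarrow> c k = 0"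
  unfolding rat_basis_def by blast

lemma rat_basis_coeffs_unique:
  assumes "rat_basis n \<beta>" "(\<Sum>k<n. of_rat (c k) * \<beta> k) = (\<Sum>k<n. of_rat (d k) * \<beta> k)" "k < n"
  shows "c k = d k"
proof -
  have "(\<Sum>k<n. of_rat (c k - d k) * \<beta> k) = 0"
    using assms(2) by (simp add: of_rat_diff left_diff_distrib sum_subtractf)
  from rat_basis_independent[OF assms(1) this assms(3)] show ?thesis
    by simp
qed

definition rat_coords :: "nat \<Rightarrow> (nat \<Rightarrow> 'k::field_char_0) \<Rightarrow> 'k \<Rightarrow> nat \<Rightarrow> rat" where
  "rat_coords n \<beta> x = (SOME c. x = (\<Sum>k<n. of_rat (c k) * \<beta> k))"

lemma rat_coords:
  assumes "rat_basis n \<beta>"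
  shows "x = (\<Sum>k<n. of_rat (rat_coords n \<beta> x k) * \<beta> k)"
proof -
  have "\<exists>c. x = (\<Sum>k<n. of_rat (c k) * \<beta> k)"
    using assms unfolding rat_basis_def by blast
  then show ?thesis
    unfolding rat_coords_def by (rule someI_ex)
qed

lemma rat_coords_sum:
  assumes "rat_basis n \<beta>" "k < n"
  shows "rat_coords n \<beta> (\<Sum>k<n. of_rat (c k) * \<beta> k) k = c k"
  using rat_basis_coeffs_unique[OF assms(1) rat_coords[OF assms(1), symmetric] assms(2)] .

lemma rat_basis_nonzero:
  assumes "rat_basis n \<beta>" "k < n"
  shows "\<beta> k \<noteq> 0"
proof
  assume "\<beta> k = 0"
  then have "(\<Sum>j<n. of_rat (if j = k then 1 else 0) * \<beta> j) = (\<Sum>j<n. of_rat 0 * \<beta> j)"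
    by (intro sum.cong) auto
  from rat_basis_coeffs_unique[OF assms(1) this assms(2)] show False
    by simp
qed

lemma rat_basis_pos:
  assumes "rat_basis n \<beta>"
  shows "0 < n"
proof (rule ccontr)
  assume "\<not> 0 < n"
  moreover obtain c where "1 = (\<Sum>k<n. of_rat (c k) * \<beta> k)"
    using assms unfolding rat_basis_def by blast
  ultimately show False by simp
qed

lemma common_denominator:
  fixes f :: "'a \<Rightarrow> rat"
  assumes "finite A"
  shows "\<exists>N::int. 0 < N \<and> (\<forall>x\<in>A. of_int N * f x \<in> \<int>)"
proof (intro exI conjI ballI)
  define den where "den x = snd (quotient_of (f x))" for x
  show "0 < (\<Prod>x\<in>A. den x)"
    by (intro prod_pos) (simp add: den_def quotient_of_denom_pos')
  fix x assume "x \<in> A"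
  with assms have "(\<Prod>x\<in>A. den x) = den x * (\<Prod>x\<in>A - {x}. den x)"
    by (rule prod.remove)
  then have eq: "of_int (\<Prod>x\<in>A. den x) * f x = of_int (\<Prod>x\<in>A - {x}. den x) * (of_int (den x) * f x)"
    by (simp only: of_int_mult ac_simps)
  obtain a b where ab: "quotient_of (f x) = (a, b)" by force
  then have "of_int (den x) * f x = of_int a"
    using quotient_of_div[OF ab] quotient_of_denom_pos[OF ab] by (simp add: den_def)
  then have "of_int (\<Prod>x\<in>A - {x}. den x) * (of_int (den x) * f x) \<in> \<int>"
    by (simp only: Ints_mult Ints_of_int)
  then show "of_int (\<Prod>x\<in>A. den x) * f x \<in> \<int>"
    by (simp only: eq)
qed

lemma rat_basis_scale:
  assumes "rat_basis n \<beta>" "r \<noteq> 0"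
  shows "rat_basis n (\<lambda>k. of_rat r * \<beta> k)"
  unfolding rat_basis_def
proof (intro conjI allI impI)
  fix x
  obtain c where "x = (\<Sum>k<n. of_rat (c k) * \<beta> k)"
    using assms(1) unfolding rat_basis_def by blast
  then have "x = (\<Sum>k<n. of_rat (c k / r) * (of_rat r * \<beta> k))"
    using assms(2) by (simp add: of_rat_divide)
  then show "\<exists>c. x = (\<Sum>k<n. of_rat (c k) * (of_rat r * \<beta> k))"
    by (rule exI[of _ "\<lambda>k. c k / r"])
next
  fix c k assume "(\<Sum>k<n. of_rat (c k) * (of_rat r * \<beta> k)) = 0" "k < n"
  then have "(\<Sum>k<n. of_rat (c k * r) * \<beta> k) = 0" "k < n"
    by (simp_all add: of_rat_mult mult.assoc)
  from rat_basis_independent[OF assms(1) this] show "c k = 0"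
    using assms(2) by simp
qed

lemma mult_table_expand:
  fixes v :: "nat \<Rightarrow> 'a::field_char_0"
  assumes "mult_table n m v"
  shows "(\<Sum>i<n. of_rat (c i) * v i) * (\<Sum>j<n. of_rat (d j) * v j) =
    (\<Sum>k<n. of_rat (\<Sum>i<n. \<Sum>j<n. c i * d j * of_int (m i j k)) * v k)"
proof -
  have "(\<Sum>i<n. of_rat (c i) * v i) * (\<Sum>j<n. of_rat (d j) * v j) =
      (\<Sum>i<n. \<Sum>j<n. of_rat (c i) * of_rat (d j) * (v i * v j))"
    by (simp add: sum_product ac_simps)
  also have "\<dots> = (\<Sum>i<n. \<Sum>j<n. \<Sum>k<n. of_rat (c i * d j * of_int (m i j k)) * v k)"
    using assms
    by (intro sum.cong refl) (simp add: mult_table_def sum_distrib_left of_rat_mult ac_simps)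
  also have "\<dots> = (\<Sum>k<n. \<Sum>i<n. \<Sum>j<n. of_rat (c i * d j * of_int (m i j k)) * v k)"
    by (subst sum.swap, rule sum.cong[OF refl], rule sum.swap)
  also have "\<dots> = (\<Sum>k<n. of_rat (\<Sum>i<n. \<Sum>j<n. c i * d j * of_int (m i j k)) * v k)"
    by (simp add: of_rat_sum sum_distrib_right)
  finally show ?thesis .
qed

lemma integral_rat_basis_exists:
  fixes \<beta> :: "nat \<Rightarrow> 'k::field_char_0"
  assumes \<beta>: "rat_basis n \<beta>"
  shows "\<exists>(b :: nat \<Rightarrow> 'k) m. rat_basis n b \<and> mult_table n m b"
proof -
  let ?\<mu> = "\<lambda>i j k. rat_coords n \<beta> (\<beta> i * \<beta> j) k"
  obtain N :: int where "0 < N"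
    and N: "\<forall>(i, j, k)\<in>{..<n} \<times> {..<n} \<times> {..<n}. of_int N * ?\<mu> i j k \<in> \<int>"
    using common_denominator[of "{..<n} \<times> {..<n} \<times> {..<n}" "\<lambda>(i, j, k). ?\<mu> i j k"]
    by (auto simp: case_prod_beta)
  define b where "b k = of_int N * \<beta> k" for k
  define m where "m i j k = \<lfloor>of_int N * ?\<mu> i j k\<rfloor>" for i j k
  have m: "of_int (m i j k) = (of_rat (of_int N * ?\<mu> i j k) :: 'k)"
    if "i < n" "j < n" "k < n" for i j k
  proof -
    have "of_int N * ?\<mu> i j k \<in> \<int>" using N that by blast
    then show ?thesis unfolding m_def by (elim Ints_cases) simp
  qed
  have mult: "b i * b j = (\<Sum>k<n. of_int (m i j k) * b k)" if ij: "i < n" "j < n" for i j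
  proof -
    have "b i * b j = of_int N * (of_int N * (\<beta> i * \<beta> j))"
      by (simp add: b_def ac_simps)
    also have "\<dots> = of_int N * (\<Sum>k<n. of_rat (of_int N * ?\<mu> i j k) * \<beta> k)"
      by (subst rat_coords[OF \<beta>, of "\<beta> i * \<beta> j"]) (simp add: sum_distrib_left of_rat_mult ac_simps)
    also have "\<dots> = (\<Sum>k<n. of_int (m i j k) * b k)"
      using m ij by (simp add: b_def sum_distrib_left ac_simps)
    finally show ?thesis .
  qed
  then have "mult_table n m b"
    unfolding mult_table_def by blast
  moreover have "rat_basis n b"
    using rat_basis_scale[OF \<beta>, of "of_int N"] \<open>0 < N\<close> by (simp add: b_def[abs_def])
  ultimately show ?thesis by blast
qed

lemma mult_table_field_hom:
  assumes "field_hom e" "mult_table n m b"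
  shows "mult_table n m (\<lambda>k. e (b k))"
  using assms(2) unfolding mult_table_def
  by (simp add: field_hom_mult[OF assms(1), symmetric] field_hom_sum[OF assms(1)]
      field_hom_mult[OF assms(1)] field_hom_of_int[OF assms(1)])

lemma sum_of_rat_delta:
  fixes v :: "nat \<Rightarrow> 'a::field_char_0"
  assumes "k0 < n"
  shows "(\<Sum>k<n. of_rat (if k = k0 then 1 else 0) * v k) = v k0"
proof -
  have "(\<Sum>k<n. of_rat (if k = k0 then 1 else 0) * v k) = (\<Sum>k<n. if k = k0 then v k else 0)"
    by (rule sum.cong) simp_all
  then show ?thesis using assms by simp
qed

definition rat_linear_ext :: "nat \<Rightarrow> (nat \<Rightarrow> 'k::field_char_0) \<Rightarrow> (nat \<Rightarrow> 'a::field_char_0) \<Rightarrow> 'k \<Rightarrow> 'a"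
  where "rat_linear_ext n \<beta> y x = (\<Sum>k<n. of_rat (rat_coords n \<beta> x k) * y k)"

context
  fixes n :: nat and b :: "nat \<Rightarrow> 'k::field_char_0" and y :: "nat \<Rightarrow> 'a::field_char_0"
  assumes b: "rat_basis n b"
begin

lemma rat_linear_ext_sum:
  "rat_linear_ext n b y (\<Sum>k<n. of_rat (c k) * b k) = (\<Sum>k<n. of_rat (c k) * y k)"
  unfolding rat_linear_ext_def by (intro sum.cong) (simp_all add: rat_coords_sum[OF b])

lemma rat_linear_ext_add:
  "rat_linear_ext n b y (x + z) = rat_linear_ext n b y x + rat_linear_ext n b y z"
proof -
  have "x + z = (\<Sum>k<n. of_rat (rat_coords n b x k + rat_coords n b z k) * b k)"
    by (subst (1 2) rat_coords[OF b]) (simp add: of_rat_add distrib_right sum.distrib)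
  then show ?thesis
    by (simp only: rat_linear_ext_sum)
      (simp add: rat_linear_ext_def of_rat_add distrib_right sum.distrib)
qed

lemma rat_linear_ext_mult:
  assumes "mult_table n m b" "mult_table n m y"
  shows "rat_linear_ext n b y (x * z) = rat_linear_ext n b y x * rat_linear_ext n b y z"
proof -
  let ?c = "\<lambda>k. \<Sum>i<n. \<Sum>j<n. rat_coords n b x i * rat_coords n b z j * of_int (m i j k)"
  have "x * z = (\<Sum>k<n. of_rat (?c k) * b k)"
    by (subst (1 2) rat_coords[OF b]) (rule mult_table_expand[OF assms(1)])
  then show ?thesis
    by (simp only: rat_linear_ext_sum) (simp add: rat_linear_ext_def mult_table_expand[OF assms(2)])
qed

lemma rat_linear_ext_basis:
  assumes "k0 < n"
  shows "rat_linear_ext n b y (b k0) = y k0"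
  using rat_linear_ext_sum[of "\<lambda>k. if k = k0 then 1 else 0"]
  by (simp only: sum_of_rat_delta[OF assms])

end

lemma field_hom_of_table_solution:
  fixes b :: "nat \<Rightarrow> 'k::field_char_0" and y :: "nat \<Rightarrow> real"
  assumes b: "rat_basis n b" "mult_table n m b"
    and y: "mult_table n m y" "k0 < n" "y k0 \<noteq> 0"
    and F: "is_subfield_real F" "\<And>k. k < n \<Longrightarrow> y k \<in> F"
  shows "\<exists>f::'k \<Rightarrow> real. field_hom f \<and> range f \<subseteq> F"
proof (intro exI conjI)
  let ?f = "rat_linear_ext n b y"
  have "?f 1 = 1"
    using rat_linear_ext_mult[OF b y(1), of 1 "b k0"] y(3)
      rat_linear_ext_basis[OF b(1), where y = y, OF y(2)]
    by simp
  then show "field_hom ?f"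
    unfolding field_hom_def using rat_linear_ext_add[OF b(1)] rat_linear_ext_mult[OF b y(1)]
    by blast
  show "range ?f \<subseteq> F"
    using F Rats_subset_subfield_real[OF F(1)]
    by (auto simp: rat_linear_ext_def intro!: subfield_real_sum subfield_real_mult)
qed

lemma Rats_square_neq_2:
  fixes r :: real
  assumes "r \<in> \<rat>"
  shows "r * r \<noteq> 2"
proof
  assume "r * r = 2"
  obtain a b :: int where b: "b > 0" and coprime: "coprime a b" and r: "r = of_int a / of_int b"
    using assms by (auto elim!: Rats_cases')
  have "of_int (a * a) = (of_int (2 * b * b) :: real)"
    using \<open>r * r = 2\<close> b unfolding r by (simp add: field_simps)
  then have aa: "a * a = 2 * b * b"
    by (simp only: of_int_eq_iff)
  then have "even a" by (metis dvd_triv_left even_mult_iff mult.assoc)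
  then obtain c where "a = 2 * c" by blast
  with aa have "b * b = 2 * c * c" by simp
  then have "even b" by (metis dvd_triv_left even_mult_iff mult.assoc)
  have "is_unit (2::int)"
    using coprime_common_divisor[OF coprime \<open>even a\<close> \<open>even b\<close>] .
  then show False by simp
qed

text \<open>The multiplication table of \<open>\<rat>(\<surd>2)\<close> in the basis \<open>1, \<surd>2\<close>.\<close>

definition sqrt2_table :: "nat \<Rightarrow> nat \<Rightarrow> nat \<Rightarrow> int" where
  "sqrt2_table i j k =
     (if i = 1 \<and> j = 1 then (if k = 0 then 2 else 0) else if i + j = k then 1 else 0)"

lemma mult_table_sqrt2_iff:
  "mult_table 2 sqrt2_table y \<longleftrightarrow>
     y 0 * y 0 = y 0 \<and> y 0 * y 1 = y 1 \<and> y 1 * y 0 = y 1 \<and> y 1 * y 1 = 2 * y 0"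
  by (auto simp: mult_table_def sqrt2_table_def numeral_2_eq_2 less_Suc_eq)

lemma ci_model_forcing_embedding:
  assumes "finite_over_rat TYPE('k::field_char_0)" and "\<exists>e::'k \<Rightarrow> real. field_hom e"
  shows "\<exists>(N::nat set) I. finite N \<and> finite I \<and> (\<forall>c\<in>I. ci_wf N c) \<and> gauss_model N I \<noteq> {} \<and>
    (\<forall>S\<in>gauss_model N I. \<exists>f::'k \<Rightarrow> real. field_hom f \<and> range f \<subseteq> subfield_gen (entries_on N S))"
proof -
  obtain n and \<beta> :: "nat \<Rightarrow> 'k" where "rat_basis n \<beta>"
    using rat_basis_exists[OF assms(1)] by blast
  then obtain b :: "nat \<Rightarrow> 'k" and m where b: "rat_basis n b" "mult_table n m b"
    using integral_rat_basis_exists by blast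
  obtain e :: "'k \<Rightarrow> real" where e: "field_hom e"
    using assms(2) by blast
  have n: "0 < n" using rat_basis_pos[OF b(1)] .
  have "mult_table n m (\<lambda>k. e (b k))" "e (b 0) \<noteq> 0"
    using mult_table_field_hom[OF e b(2)] field_hom_nonzero[OF e rat_basis_nonzero[OF b(1) n]]
    by simp_all
  from ci_model_realizing_table[OF n this] obtain N I
    where "finite N" "finite I" "\<forall>c\<in>I. ci_wf N c" "gauss_model N I \<noteq> {}"
      and sol: "\<forall>S\<in>gauss_model N I. \<exists>y. (\<forall>k<n. y k \<in> subfield_gen (entries_on N S)) \<and>
        y 0 \<noteq> 0 \<and> mult_table n m y"
    by blast
  moreover have "\<exists>f::'k \<Rightarrow> real. field_hom f \<and> range f \<subseteq> subfield_gen (entries_on N S)"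
    if S: "S \<in> gauss_model N I" for S
  proof -
    from sol S obtain y where y: "\<forall>k<n. y k \<in> subfield_gen (entries_on N S)" "y 0 \<noteq> 0"
      "mult_table n m y"
      by blast
    show ?thesis
      using y(1)
      by (intro field_hom_of_table_solution[OF b y(3) n y(2) is_subfield_real_subfield_gen]) blast
  qed
  ultimately show ?thesis by (intro exI[of _ N] exI[of _ I]) blast
qed

lemma ci_model_without_rational_points:
  "\<exists>(N::nat set) I. finite N \<and> finite I \<and> (\<forall>c\<in>I. ci_wf N c) \<and> gauss_model N I \<noteq> {} \<and>
    (\<forall>S\<in>gauss_model N I. \<not> entries_on N S \<subseteq> \<rat>)"
proof -
  have "mult_table 2 sqrt2_table (\<lambda>k. if k = 0 then 1 else sqrt 2)"
    by (simp add: mult_table_sqrt2_iff)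
  from ci_model_realizing_table[where ?k0.0 = 0, OF _ this] obtain N I
    where "finite N" "finite I" "\<forall>c\<in>I. ci_wf N c" "gauss_model N I \<noteq> {}"
      and sol: "\<forall>S\<in>gauss_model N I. \<exists>y. (\<forall>k<2. y k \<in> subfield_gen (entries_on N S)) \<and>
        y 0 \<noteq> 0 \<and> mult_table 2 sqrt2_table y"
    by auto
  moreover have "\<not> entries_on N S \<subseteq> \<rat>" if S: "S \<in> gauss_model N I" for S
  proof
    assume "entries_on N S \<subseteq> \<rat>"
    then have "subfield_gen (entries_on N S) \<subseteq> \<rat>"
      by (rule subfield_gen_least[OF is_subfield_real_Rats])
    moreover obtain y where "\<forall>k<2. y k \<in> subfield_gen (entries_on N S)" "y 0 \<noteq> 0"
      "mult_table 2 sqrt2_table y"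
      using sol S by blast
    ultimately have "y 1 \<in> \<rat>" and "y 0 = 1" and "y 1 * y 1 = 2 * y 0"
      by (auto simp: mult_table_sqrt2_iff)
    then show False
      using Rats_square_neq_2 by simp
  qed
  ultimately show ?thesis by (intro exI[of _ N] exI[of _ I]) blast
qed

theorem corollary4p3:
  fixes TYPE_K :: "'k::field_char_0 itself"
  assumes "finite_over_rat TYPE('k)"
    and "\<exists>e::'k \<Rightarrow> real. field_hom e"
  shows "(\<exists>(N::nat set) I. finite N \<and> finite I \<and> (\<forall>c\<in>I. ci_wf N c) \<and>
            gauss_model N I \<noteq> {} \<and>
            (\<forall>S\<in>gauss_model N I. \<exists>f::'k \<Rightarrow> real. field_hom f \<and>
                 range f \<subseteq> subfield_gen (entries_on N S)))
       \<and> (\<exists>(N::nat set) I. finite N \<and> finite I \<and> (\<forall>c\<in>I. ci_wf N c) \<and>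
            gauss_model N I \<noteq> {} \<and>
            (\<forall>S\<in>gauss_model N I. \<not> entries_on N S \<subseteq> \<rat>))"
  using ci_model_forcing_embedding[OF assms] ci_model_without_rational_points by (rule conjI)

end
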